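(* Let $\beta>0$ and $\varepsilon>0$, and let $q_0,q_1$ be the probability distributions on four outcomes given by $$q_0=\frac1{Z_0}\bigl(e^{2\beta},1,e^{-\beta},e^{-\beta}\bigr),\qquad q_1=\frac1{Z_1}\bigl(e^{2\beta},1,e^{-\beta+2\beta\varepsilon},e^{-\beta-2\beta\varepsilon}\bigr),$$ with $Z_0,Z_1$ the normalizing constants. Then $\mathrm{D}(q_1\|q_0)\le8\beta^2\varepsilon^2e^{-3\beta+2\beta\varepsilon}$. When $\varepsilon\le1/2$, $\mathrm{D}(q_1\|q_0)\le8\beta^2\varepsilon^2e^{-2\beta}$.
   Context: $\mathrm{D}(p\|q)=\sum_jp_j\log(p_j/q_j)$ is the Kullback–Leibler divergence (natural logarithm). These are the diagonal Gibbs distributions at inverse temperature $\beta$ of the two-qubit diagonal Hamiltonians $H_0=\mathrm{diag}(-2,0,1,1)$ and $H_1=\mathrm{diag}(-2,0,1+2\varepsilon,1-2\varepsilon)$. *)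

theory Defs
  imports Complex_Main
begin

definition KL :: "(nat \<Rightarrow> real) \<Rightarrow> (nat \<Rightarrow> real) \<Rightarrow> real" where
  "KL p q = (\<Sum>j<4. p j * ln (p j / q j))"

definition normalize4 :: "(nat \<Rightarrow> real) \<Rightarrow> nat \<Rightarrow> real" where
  "normalize4 w j = w j / (\<Sum>k<4. w k)"

definition w0 :: "real \<Rightarrow> nat \<Rightarrow> real" where
  "w0 \<beta> j = [exp (2*\<beta>), 1, exp (-\<beta>), exp (-\<beta>)] ! j"

definition w1 :: "real \<Rightarrow> real \<Rightarrow> nat \<Rightarrow> real" where
  "w1 \<beta> \<epsilon> j = [exp (2*\<beta>), 1, exp (-\<beta> + 2*\<beta>*\<epsilon>), exp (-\<beta> - 2*\<beta>*\<epsilon>)] ! j"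

definition q0 :: "real \<Rightarrow> nat \<Rightarrow> real" where
  "q0 \<beta> = normalize4 (w0 \<beta>)"

definition q1 :: "real \<Rightarrow> real \<Rightarrow> nat \<Rightarrow> real" where
  "q1 \<beta> \<epsilon> = normalize4 (w1 \<beta> \<epsilon>)"

end

theory Submission
  imports Defs
begin

(* For positive weights w, v the divergence of the normalized distributions is
   sum_j p_j ln (w_j / v_j) - ln (Z_w / Z_v).  Here, with t = 2 beta eps, the weights differ only
   in the last two entries, by factors e^t and e^-t, so the first term is
   2 t e^-beta sinh t / Z1, while Z1 - Z0 = 2 e^-beta (cosh t - 1) >= 0 makes the second term
   nonpositive.  Finally sinh t <= t e^t (from e^-2t >= 1 - 2t) and Z1 >= e^(2 beta). *)

lemma sum_lessThan_4: "(\<Sum>j<(4::nat). f j) = f 0 + f 1 + f 2 + (f 3 :: real)"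
  by (simp add: numeral_eq_Suc)

lemma KL_normalize4:
  assumes w: "\<And>j. j < 4 \<Longrightarrow> w j > 0" and v: "\<And>j. j < 4 \<Longrightarrow> v j > 0"
  shows "KL (normalize4 w) (normalize4 v)
       = (\<Sum>j<4. normalize4 w j * ln (w j / v j)) - ln ((\<Sum>k<4. w k) / (\<Sum>k<4. v k))"
proof -
  define W V where "W = (\<Sum>k<4. w k)" and "V = (\<Sum>k<4. v k)"
  have "W > 0" "V > 0" unfolding W_def V_def using w v by (simp_all add: sum_lessThan_4 add_pos_pos)
  have ln_ratio: "ln (normalize4 w j / normalize4 v j) = ln (w j / v j) - ln (W / V)"
    if "j < 4" for j
  proof -
    have "normalize4 w j / normalize4 v j = (w j / v j) / (W / V)"
      using \<open>W > 0\<close> \<open>V > 0\<close> by (simp add: normalize4_def W_def V_def field_simps)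
    then show ?thesis
      using w[OF that] v[OF that] \<open>W > 0\<close> \<open>V > 0\<close> by (simp add: ln_div ln_mult)
  qed
  have "(\<Sum>j<4. normalize4 w j) = 1"
    using \<open>W > 0\<close> by (simp add: normalize4_def W_def flip: sum_divide_distrib)
  then show ?thesis
    by (simp add: KL_def ln_ratio right_diff_distrib sum_subtractf W_def V_def
        flip: sum_distrib_right)
qed

lemma sinh_le_mult_exp: "sinh t \<le> t * exp (t :: real)"
proof -
  have "exp t * (1 - 2*t) \<le> exp t * exp (-2*t)"
    using exp_ge_add_one_self[of "-2*t"] by (intro mult_left_mono) auto
  then show ?thesis
    by (simp add: sinh_field_def algebra_simps flip: exp_add)
qed

lemma sum_w0: "(\<Sum>k<4. w0 \<beta> k) = exp (2*\<beta>) + 1 + 2 * exp (-\<beta>)"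
  by (simp add: sum_lessThan_4 w0_def)

lemma sum_w1: "(\<Sum>k<4. w1 \<beta> \<epsilon> k) = exp (2*\<beta>) + 1 + 2 * exp (-\<beta>) * cosh (2*\<beta>*\<epsilon>)"
  by (simp add: sum_lessThan_4 w1_def cosh_field_def algebra_simps flip: exp_add)

lemma sum_w0_le_sum_w1: "(\<Sum>k<4. w0 \<beta> k) \<le> (\<Sum>k<4. w1 \<beta> \<epsilon> k)"
  using cosh_real_ge_1[of "2*\<beta>*\<epsilon>"] by (simp add: sum_w0 sum_w1)

lemma KL_q1_q0:
  "KL (q1 \<beta> \<epsilon>) (q0 \<beta>)
     = 2 * (2*\<beta>*\<epsilon>) * exp (-\<beta>) * sinh (2*\<beta>*\<epsilon>) / (\<Sum>k<4. w1 \<beta> \<epsilon> k)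
       - ln ((\<Sum>k<4. w1 \<beta> \<epsilon> k) / (\<Sum>k<4. w0 \<beta> k))"
proof -
  define t where "t = 2*\<beta>*\<epsilon>"
  have "w1 \<beta> \<epsilon> j > 0" "w0 \<beta> j > 0" if "j < 4" for j
    using that by (auto simp: w0_def w1_def numeral_eq_Suc less_Suc_eq)
  then have "KL (q1 \<beta> \<epsilon>) (q0 \<beta>)
      = (\<Sum>j<4. q1 \<beta> \<epsilon> j * ln (w1 \<beta> \<epsilon> j / w0 \<beta> j))
        - ln ((\<Sum>k<4. w1 \<beta> \<epsilon> k) / (\<Sum>k<4. w0 \<beta> k))"
    unfolding q0_def q1_def by (rule KL_normalize4)
  moreover have "ln (w1 \<beta> \<epsilon> 0 / w0 \<beta> 0) = 0" "ln (w1 \<beta> \<epsilon> 1 / w0 \<beta> 1) = 0"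
    "ln (w1 \<beta> \<epsilon> 2 / w0 \<beta> 2) = t" "ln (w1 \<beta> \<epsilon> 3 / w0 \<beta> 3) = -t"
    by (simp_all add: w0_def w1_def t_def flip: exp_diff)
  moreover have "w1 \<beta> \<epsilon> 2 = exp (-\<beta>) * exp t" "w1 \<beta> \<epsilon> 3 = exp (-\<beta>) * exp (-t)"
    by (simp_all add: w1_def t_def flip: exp_add)
  then have "w1 \<beta> \<epsilon> 2 * t + w1 \<beta> \<epsilon> 3 * -t = 2 * t * exp (-\<beta>) * sinh t"
    by (simp add: sinh_field_def algebra_simps)
  ultimately show ?thesis
    by (simp add: sum_lessThan_4 q1_def normalize4_def t_def flip: diff_divide_distrib)
qed

lemma KL_q1_q0_le:
  assumes "\<beta> * \<epsilon> \<ge> 0"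
  shows "KL (q1 \<beta> \<epsilon>) (q0 \<beta>) \<le> 8 * \<beta>\<^sup>2 * \<epsilon>\<^sup>2 * exp (-3*\<beta> + 2*\<beta>*\<epsilon>)"
proof -
  define t Z0 Z1 where "t = 2*\<beta>*\<epsilon>" and "Z0 = (\<Sum>k<4. w0 \<beta> k)" and "Z1 = (\<Sum>k<4. w1 \<beta> \<epsilon> k)"
  have "t \<ge> 0" using assms by (simp add: t_def)
  have "Z0 > 0" by (simp add: Z0_def sum_w0 add_pos_pos)
  then have "ln (Z1 / Z0) \<ge> 0" using sum_w0_le_sum_w1 by (simp add: Z0_def Z1_def)
  have "exp (2*\<beta>) \<le> Z1" by (simp add: Z1_def sum_w1 add_nonneg_nonneg)
  then have "2 * t * exp (-\<beta>) * sinh t / Z1 \<le> 2 * t * exp (-\<beta>) * (t * exp t) / exp (2*\<beta>)"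
    using \<open>t \<ge> 0\<close> sinh_le_mult_exp[of t] by (intro frac_le mult_left_mono) auto
  also have "\<dots> = 8 * \<beta>\<^sup>2 * \<epsilon>\<^sup>2 * exp (-3*\<beta> + 2*\<beta>*\<epsilon>)"
    by (simp add: t_def power2_eq_square field_simps flip: exp_add)
  finally show ?thesis
    using \<open>ln (Z1 / Z0) \<ge> 0\<close> by (simp add: KL_q1_q0 Z0_def Z1_def t_def)
qed

theorem lemma5p1:
  fixes \<beta> \<epsilon> :: real
  assumes "\<beta> > 0" and "\<epsilon> > 0"
  shows "KL (q1 \<beta> \<epsilon>) (q0 \<beta>) \<le> 8 * \<beta>\<^sup>2 * \<epsilon>\<^sup>2 * exp (-3*\<beta> + 2*\<beta>*\<epsilon>)
       \<and> (\<epsilon> \<le> 1/2 \<longrightarrow> KL (q1 \<beta> \<epsilon>) (q0 \<beta>) \<le> 8 * \<beta>\<^sup>2 * \<epsilon>\<^sup>2 * exp (-2*\<beta>))"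
proof (intro conjI impI)
  show bound: "KL (q1 \<beta> \<epsilon>) (q0 \<beta>) \<le> 8 * \<beta>\<^sup>2 * \<epsilon>\<^sup>2 * exp (-3*\<beta> + 2*\<beta>*\<epsilon>)"
    using assms by (intro KL_q1_q0_le) simp
  assume "\<epsilon> \<le> 1/2"
  then have "-3*\<beta> + 2*\<beta>*\<epsilon> \<le> -2*\<beta>"
    using mult_left_mono[of \<epsilon> "1/2" \<beta>] assms by simp
  then have "exp (-3*\<beta> + 2*\<beta>*\<epsilon>) \<le> exp (-2*\<beta>)" by simp
  then have "8 * \<beta>\<^sup>2 * \<epsilon>\<^sup>2 * exp (-3*\<beta> + 2*\<beta>*\<epsilon>) \<le> 8 * \<beta>\<^sup>2 * \<epsilon>\<^sup>2 * exp (-2*\<beta>)"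
    by (intro mult_left_mono) simp_all
  with bound show "KL (q1 \<beta> \<epsilon>) (q0 \<beta>) \<le> 8 * \<beta>\<^sup>2 * \<epsilon>\<^sup>2 * exp (-2*\<beta>)"
    by linarith
qed

end
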